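(* For integers $n$ and $\lceil n/2\rceil\le j\le n$ let $$B_j=\Big(\frac{n!}{(n-j)!}\Big)^2\frac{1}{j!}\Big(1-\frac{j}{n}\Big)^{n\log n},$$ and set $\varphi_2(n)=\sum_{j=\lceil n/2\rceil}^{n}B_j$. Then for $n\ge 9$, $$\varphi_2(n)\le\exp\Big\{1-\tfrac{3}{1000}\,n\log n\Big\}.$$
   Context: $\log$ denotes the natural logarithm. *)

theory Defs
  imports Complex_Main
begin

definition B_term :: "nat \<Rightarrow> nat \<Rightarrow> real" where
  "B_term n j = (fact n / fact (n - j)) ^ 2 * (1 / fact j) *
     (1 - real j / real n) powr (real n * ln (real n))"

definition phi2 :: "nat \<Rightarrow> real" where
  "phi2 n = (\<Sum>j = nat \<lceil>real n / 2\<rceil>..n. B_term n j)"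

end

theory Submission
  imports Defs "HOL-Analysis.Harmonic_Numbers"
begin

(* The proof has two parts.
   1. Geometric decay: for j \<ge> n/2 the terms satisfy B_(j+1) \<le> B_j / 2, since with k = n - j
      the ratio is k^2/(j+1) * ((k-1)/k)^(n ln n) and ((k-1)/k)^(n ln n) \<le> e^(-2 ln n).  Hence
      phi2 n \<le> 2 B_\<lceil>n/2\<rceil>.
   2. The first term: for n = 2m it equals A(m) 2^(-n ln n) with A(m) = ((2m)!/m!)^2 / m!, and for
      n = 2m+1 it is at most (n/(m+1)) A(m) 2^(-n ln n).  An induction on m, comparing the
      recurrence A(m+1)/A(m) = 4(2m+1)^2/(m+1) with the growth of x ln x, shows
      ln (2 A(m)) \<le> 1 + (ln 2 - 3/1000) (2m) ln (2m) for m \<ge> 4, which gives the claim in both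
      parity cases. *)

lemma ln2_gt: "ln (2::real) > 693/1000"
proof -
  have "ln (2::real) \<in> {307/443..}"
    using ln_approx_bounds[of 2 3] by (simp add: eval_nat_numeral)
  thus ?thesis by simp
qed

lemma ln_8: "ln (8::real) = 3 * ln 2"
  using ln_realpow[of "2::real" 3] by simp

lemma ln_ratio_le:
  fixes x y :: real
  assumes "0 < x" "x < y"
  shows "ln x \<le> ln y - (y - x) / y"
proof -
  have "ln (x / y) \<le> x / y - 1" using assms by (intro ln_le_minus_one) simp
  moreover have "ln (x / y) = ln x - ln y" using assms by (simp add: ln_div)
  moreover have "x / y - 1 = - ((y - x) / y)" using assms by (simp add: field_simps)
  ultimately show ?thesis by linarith
qed

lemma powr_le_exp:
  fixes x L :: real
  assumes "0 \<le> x" "0 \<le> L"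
  shows "x powr L \<le> exp (L * (x - 1))"
proof (cases "x = 0")
  case False
  then have "L * ln x \<le> L * (x - 1)"
    using assms by (intro mult_left_mono ln_le_minus_one) simp_all
  then show ?thesis using False by (simp add: powr_def)
qed simp

lemma sum_halving_le:
  fixes f :: "nat \<Rightarrow> 'a::linordered_field"
  assumes "lo \<le> hi" and halving: "\<And>j. lo \<le> j \<Longrightarrow> j < hi \<Longrightarrow> 2 * f (Suc j) \<le> f j"
  shows "sum f {lo..hi} \<le> 2 * f lo - f hi"
  using assms(1)
proof (induction hi rule: dec_induct)
  case (step hi)
  have "sum f {lo..Suc hi} = sum f {lo..hi} + f (Suc hi)"
    using step.hyps by (simp add: sum.nat_ivl_Suc')
  also have "\<dots> \<le> 2 * f lo - f hi + f (Suc hi)" using step.IH by simp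
  also have "\<dots> \<le> 2 * f lo - f (Suc hi)" using halving[of hi] step.hyps by simp
  finally show ?case .
qed simp

lemma B_term_nonneg: "B_term n j \<ge> 0"
  unfolding B_term_def by simp

lemma B_term_Suc:
  assumes "j < n"
  shows "B_term n (Suc j) = B_term n j *
    (real (n - j) ^ 2 / real (Suc j) * ((real (n - j) - 1) / real (n - j)) powr (real n * ln (real n)))"
proof -
  define k where "k = n - j"
  define L where "L = real n * ln (real n)"
  have k: "n - j = Suc (n - Suc j)" "real (n - Suc j) = real k - 1"
    using assms unfolding k_def by (simp_all add: of_nat_diff)
  have fact_quot: "fact n / fact (n - Suc j) = real k * (fact n / fact (n - j) :: real)"
    unfolding k(1) k_def by simp
  have base: "1 - real (Suc j) / real n = (1 - real j / real n) * ((real k - 1) / real k)"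
    using assms unfolding k_def by (simp add: of_nat_diff field_simps)
  show ?thesis
    unfolding B_term_def fact_quot base powr_mult k_def[symmetric] L_def[symmetric]
    by (simp add: field_simps power2_eq_square)
qed

(* In the summation range j \<ge> n/2 the terms at least halve: the factor ((k-1)/k)^(n ln n)
   is at most e^(-n ln n / k) \<le> n^(-2) because k \<le> n/2, and k^2/(j+1) \<le> n^2/4. *)
lemma B_term_halves:
  assumes "n \<le> 2 * j" "j < n"
  shows "2 * B_term n (Suc j) \<le> B_term n j"
proof -
  define k where "k = real (n - j)"
  define L where "L = real n * ln (real n)"
  have k: "1 \<le> k" "2 * k \<le> real n" using assms unfolding k_def by (simp_all add: of_nat_diff)
  have n: "real n \<ge> 2" using k by simp
  have "((k - 1) / k) powr L \<le> exp (L * ((k - 1) / k - 1))"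
    using k n unfolding L_def by (intro powr_le_exp) simp_all
  also have "L * ((k - 1) / k - 1) = - (L / k)" using k by (simp add: field_simps)
  also have "exp (- (L / k)) \<le> exp (- (2 * ln (real n)))"
  proof -
    have "2 * k * ln (real n) \<le> L" unfolding L_def using k n by (intro mult_right_mono) simp_all
    then show ?thesis using k by (simp add: field_simps)
  qed
  also have "exp (- (2 * ln (real n))) = 1 / real n ^ 2"
  proof -
    have "exp (2 * ln (real n)) = exp (ln (real n ^ 2))" using n by (simp add: ln_realpow)
    also have "\<dots> = real n ^ 2" using n by simp
    finally have "exp (2 * ln (real n)) = real n ^ 2" .
    then show ?thesis by (simp add: exp_minus field_simps)
  qed
  finally have decay: "((k - 1) / k) powr L \<le> 1 / real n ^ 2" .
  have "k ^ 2 / real (Suc j) * ((k - 1) / k) powr L \<le> k ^ 2 * (1 / real n ^ 2)"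
    using decay by (intro mult_mono) (simp_all add: field_simps)
  also have "\<dots> \<le> 1 / 2"
  proof -
    have "(2 * k) ^ 2 \<le> real n ^ 2" using k by (intro power_mono) simp_all
    then have "4 * k ^ 2 \<le> real n ^ 2" by (simp add: power_mult_distrib)
    then have "2 * k ^ 2 \<le> real n ^ 2" using zero_le_power2[of k] by linarith
    then show ?thesis using n by (simp add: field_simps)
  qed
  finally have ratio: "k ^ 2 / real (Suc j) * ((k - 1) / k) powr L \<le> 1 / 2" .
  have "B_term n (Suc j) \<le> B_term n j * (1 / 2)"
    unfolding B_term_Suc[OF assms(2)] k_def[symmetric] L_def[symmetric]
    using ratio B_term_nonneg by (rule mult_left_mono)
  then show ?thesis by simp
qed

(* The factorial part A(m) = ((2m)!/m!)^2 / m! of the first term; for n = 2m the first term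
   is B_m = A(m) 2^(-n ln n), and for n = 2m+1 it is a small multiple of A(m). *)
definition central_factor :: "nat \<Rightarrow> real" where
  "central_factor m = (fact (2 * m) / fact m) ^ 2 / fact m"

lemma central_factor_pos: "central_factor m > 0"
  unfolding central_factor_def by simp

lemma central_factor_Suc:
  "central_factor (Suc m) = central_factor m * (4 * (2 * real m + 1) ^ 2 / (real m + 1))"
proof -
  define r where "r = fact (2 * m) / (fact m :: real)"
  have "fact (2 * Suc m) / fact (Suc m)
      = ((real m + 1) * (2 * (2 * real m + 1) * fact (2 * m))) / ((real m + 1) * (fact m :: real))"
    by (simp add: algebra_simps)
  also have "\<dots> = 2 * (2 * real m + 1) * r" unfolding r_def by simp
  finally have "central_factor (Suc m) = (2 * (2 * real m + 1) * r) ^ 2 / ((real m + 1) * fact m)"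
    unfolding central_factor_def by simp
  also have "\<dots> = r ^ 2 / fact m * (4 * (2 * real m + 1) ^ 2 / (real m + 1))"
    by (simp add: field_simps power2_eq_square)
  finally show ?thesis unfolding central_factor_def r_def .
qed

(* Induction step for the bound on A: the logarithmic increment of A is dominated by the
   increment of (ln 2 - 3/1000) x ln x between x = 2m and x = 2m+2, for m \<ge> 4. *)
lemma ln_central_factor_step:
  fixes x :: real
  assumes x: "x \<ge> 4"
  shows "ln (4 * (2 * x + 1) ^ 2 / (x + 1))
    \<le> (ln 2 - 3/1000) * ((2 * x + 2) * ln (2 * x + 2) - 2 * x * ln (2 * x))"
proof -
  define a :: real where "a = ln 2"
  define c where "c = a - 3/1000"
  define X where "X = ln (2 * x + 2)"
  define u where "u = 1 / (x + 1)"
  have a: "a > 693/1000" unfolding a_def by (rule ln2_gt)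
  have u: "0 < u" "u \<le> 1/5" unfolding u_def using x by (simp_all add: field_simps)
  have "ln (x + 1) = X - a"
    using ln_mult[of 2 "x + 1"] x unfolding X_def a_def by (simp add: algebra_simps)
  moreover have "ln (4::real) = 2 * a" using ln_realpow[of "2::real" 2] unfolding a_def by simp
  ultimately have lhs: "ln (4 * (2 * x + 1) ^ 2 / (x + 1)) = 3 * a + 2 * ln (2 * x + 1) - X"
    using x by (simp add: ln_div ln_mult ln_realpow)
  have middle: "ln (2 * x + 1) \<le> X - u / 2"
    using ln_ratio_le[of "2 * x + 1" "2 * x + 2"] x unfolding X_def u_def by (simp add: field_simps)
  have "2 * x * ln (2 * x) \<le> 2 * x * (X - u)"
    using ln_ratio_le[of "2 * x" "2 * x + 2"] x unfolding X_def u_def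
    by (intro mult_left_mono) (simp_all add: field_simps)
  moreover have "2 * x * u = 2 - 2 * u" unfolding u_def using x by (simp add: field_simps)
  ultimately have growth: "(2 * x + 2) * X - 2 * x * ln (2 * x) \<ge> 2 * X + 2 - 2 * u"
    by (simp add: algebra_simps)
  have "X \<ge> ln 10" unfolding X_def using x by simp
  moreover have "ln (10::real) \<ge> 3 * a + 1/5"
    using ln_ratio_le[of 8 10] ln_8 unfolding a_def by simp
  ultimately have Xu: "X - u \<ge> 3 * a" using u by linarith
  have "(2 * c - 1) * (X - u) \<ge> (2 * c - 1) * (3 * a)"
    using Xu a unfolding c_def by (intro mult_left_mono) simp_all
  moreover have "(2 * c - 1) * (3 * a) \<ge> a + 6/1000"
  proof -
    have "a * (6 * a - 4018/1000) \<ge> 693/1000 * (6 * a - 4018/1000)"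
      using a by (intro mult_right_mono) simp_all
    then show ?thesis using a unfolding c_def by (simp add: algebra_simps)
  qed
  moreover have "c * (2 * X + 2 - 2 * u) - (3 * a + X - u) = (2 * c - 1) * (X - u) - (a + 6/1000)"
    unfolding c_def by (simp add: field_simps)
  ultimately have "3 * a + 2 * ln (2 * x + 1) - X \<le> c * (2 * X + 2 - 2 * u)"
    using middle by linarith
  also have "\<dots> \<le> c * ((2 * x + 2) * X - 2 * x * ln (2 * x))"
    using growth a unfolding c_def by (intro mult_left_mono) simp_all
  finally show ?thesis unfolding lhs c_def a_def X_def .
qed

(* Base case m = 4: 2 A(4) = 235200 \<le> 2^(357/20), checked via ln. *)
lemma ln_central_factor_4:
  "ln (2 * central_factor 4) \<le> 1 + (ln 2 - 3/1000) * (real (2 * 4) * ln (real (2 * 4)))"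
proof -
  have "central_factor 4 = 117600" unfolding central_factor_def by (simp add: fact_numeral)
  then have "ln (2 * central_factor 4) = ln 235200" by simp
  also have "\<dots> \<le> 357 / 20 * ln 2"
  proof -
    have "ln ((235200::real) ^ 20) \<le> ln (2 ^ 357)" by (subst ln_le_cancel_iff) simp_all
    moreover have "ln ((235200::real) ^ 20) = 20 * ln 235200" using ln_realpow[of 235200 20] by simp
    moreover have "ln ((2::real) ^ 357) = 357 * ln 2" using ln_realpow[of 2 357] by simp
    ultimately show ?thesis by linarith
  qed
  also have "\<dots> \<le> 1 + (ln 2 - 3/1000) * (8 * (3 * ln 2))"
  proof -
    have a: "ln (2::real) > 693/1000" by (rule ln2_gt)
    have "0 \<le> 24 * (ln 2 - 693/1000) ^ 2 + (48 * 693/1000 - 17922/1000) * (ln (2::real) - 693/1000)"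
      using a by (intro add_nonneg_nonneg mult_nonneg_nonneg) simp_all
    then show ?thesis by (simp add: algebra_simps power2_eq_square)
  qed
  also have "8 * (3 * ln (2::real)) = real (2 * 4) * ln (real (2 * 4))" using ln_8 by simp
  finally show ?thesis .
qed

lemma ln_central_factor_bound:
  assumes "m \<ge> 4"
  shows "ln (2 * central_factor m) \<le> 1 + (ln 2 - 3/1000) * (real (2 * m) * ln (real (2 * m)))"
  using assms
proof (induction m rule: dec_induct)
  case base
  show ?case by (rule ln_central_factor_4)
next
  case (step m)
  have "ln (2 * central_factor (Suc m))
      = ln ((2 * central_factor m) * (4 * (2 * real m + 1) ^ 2 / (real m + 1)))"
    unfolding central_factor_Suc by (simp add: mult.assoc)
  also have "\<dots> = ln (2 * central_factor m) + ln (4 * (2 * real m + 1) ^ 2 / (real m + 1))"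
    using central_factor_pos[of m] by (intro ln_mult_pos) simp_all
  also have "\<dots> \<le> 1 + (ln 2 - 3/1000) * (real (2 * Suc m) * ln (real (2 * Suc m)))"
    using step.IH ln_central_factor_step[of "real m"] step.hyps
    by (simp add: algebra_simps)
  finally show ?case .
qed

lemma central_factor_bound:
  assumes "m \<ge> 4"
  shows "2 * central_factor m \<le> exp (1 + (ln 2 - 3/1000) * (real (2 * m) * ln (real (2 * m))))"
proof -
  have "2 * central_factor m = exp (ln (2 * central_factor m))"
    using central_factor_pos[of m] by simp
  also have "\<dots> \<le> exp (1 + (ln 2 - 3/1000) * (real (2 * m) * ln (real (2 * m))))"
    using ln_central_factor_bound[OF assms] by (simp only: exp_le_cancel_iff)
  finally show ?thesis .
qed

lemma half_powr: "(1/2 :: real) powr L = exp (- (ln 2 * L))"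
  by (simp add: powr_def ln_div)

lemma first_term_even:
  assumes m: "m \<ge> 5"
  shows "2 * B_term (2 * m) m \<le> exp (1 - 3/1000 * real (2 * m) * ln (real (2 * m)))"
proof -
  define L where "L = real (2 * m) * ln (real (2 * m))"
  have half: "1 - real m / real (2 * m) = 1 / 2" using m by simp
  have "B_term (2 * m) m = central_factor m * (1/2) powr L"
    unfolding B_term_def central_factor_def half L_def by simp
  then have "2 * B_term (2 * m) m = 2 * central_factor m * exp (- (ln 2 * L))"
    by (simp add: half_powr)
  also have "\<dots> \<le> exp (1 + (ln 2 - 3/1000) * L) * exp (- (ln 2 * L))"
    using central_factor_bound[of m] m unfolding L_def by (intro mult_right_mono) simp_all
  also have "\<dots> = exp (1 - 3/1000 * L)" by (simp add: exp_add[symmetric] algebra_simps)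
  finally show ?thesis unfolding L_def by (simp add: mult.assoc)
qed

(* The growth of x ln x from 2m to 2m+1 is at least ln (2m+1) \<ge> 3 ln 2, which pays for an
   extra factor 2:  ln 2 + c (2m) ln (2m) \<le> c (2m+1) ln (2m+1) for c = ln 2 - 3/1000. *)
lemma growth_pays_factor_2:
  assumes m: "m \<ge> 4"
  shows "ln 2 + (ln 2 - 3/1000) * (real (2 * m) * ln (real (2 * m)))
    \<le> (ln 2 - 3/1000) * (real (2 * m + 1) * ln (real (2 * m + 1)))"
proof -
  define n where "n = 2 * m + 1"
  define a :: real where "a = ln 2"
  define c where "c = a - 3/1000"
  have a: "a > 693/1000" unfolding a_def by (rule ln2_gt)
  have "ln (real (2 * m)) \<le> ln (real n)" unfolding n_def using m by simp
  then have "real (2 * m) * ln (real (2 * m)) \<le> real (2 * m) * ln (real n)"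
    using m by (intro mult_left_mono) simp_all
  moreover have "ln (real n) \<ge> 3 * a"
  proof -
    have "ln 8 \<le> ln (real n)" unfolding n_def using m by simp
    then show ?thesis using ln_8 unfolding a_def by simp
  qed
  ultimately have "real n * ln (real n) - real (2 * m) * ln (real (2 * m)) \<ge> 3 * a"
    unfolding n_def by (simp add: algebra_simps)
  then have "c * (real n * ln (real n) - real (2 * m) * ln (real (2 * m))) \<ge> c * (3 * a)"
    using a unfolding c_def by (intro mult_left_mono) simp_all
  moreover have "c * (3 * a) \<ge> a"
    using a mult_nonneg_nonneg[of a "3 * c - 1"] unfolding c_def by (simp add: algebra_simps)
  ultimately show ?thesis unfolding n_def[symmetric] a_def[symmetric] c_def[symmetric]
    by (simp add: right_diff_distrib)
qed

(* Twice the first term for odd n = 2m+1 \<ge> 9: B_(m+1) = n^2/(m+1) A(m) (m/n)^(n ln n), and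
   (m/n)^(n ln n) \<le> 2^(-n ln n)/n; the lost factor 2 is paid for by the growth of x ln x
   from 2m to n. *)
lemma first_term_odd:
  assumes m: "m \<ge> 4"
  shows "2 * B_term (2 * m + 1) (m + 1)
    \<le> exp (1 - 3/1000 * real (2 * m + 1) * ln (real (2 * m + 1)))"
proof -
  define n where "n = 2 * m + 1"
  define L where "L = real n * ln (real n)"
  define L0 where "L0 = real (2 * m) * ln (real (2 * m))"
  define a :: real where "a = ln 2"
  define c where "c = a - 3/1000"
  have n: "real n \<ge> 9" unfolding n_def using m by simp
  have L: "L \<ge> 0" unfolding L_def using n by simp
  have base: "1 - real (m + 1) / real n = (real (2 * m) / real n) * (1/2)"
    unfolding n_def by (simp add: field_simps)
  have B: "B_term n (m + 1)
      = real n ^ 2 / (real m + 1) * central_factor m * ((real (2 * m) / real n) powr L * (1/2) powr L)"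
    unfolding B_term_def central_factor_def base powr_mult L_def[symmetric]
    by (simp add: n_def field_simps power2_eq_square)
  have decay: "(real (2 * m) / real n) powr L \<le> 1 / real n"
  proof -
    have "(real (2 * m) / real n) powr L \<le> exp (L * (real (2 * m) / real n - 1))"
      using L by (intro powr_le_exp) simp_all
    also have "L * (real (2 * m) / real n - 1) = - ln (real n)"
      unfolding L_def n_def by (simp add: field_simps)
    finally show ?thesis using n by (simp add: exp_minus inverse_eq_divide)
  qed
  have "2 * B_term n (m + 1) \<le> 2 * (real n ^ 2 / (real m + 1) * central_factor m * (1 / real n * (1/2) powr L))"
    unfolding B using decay central_factor_pos[of m] by (intro mult_left_mono mult_right_mono) simp_all
  also have "\<dots> = real n / (real m + 1) * (2 * central_factor m) * exp (- (a * L))"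
    unfolding half_powr a_def using n by (simp add: field_simps power2_eq_square)
  also have "\<dots> \<le> 2 * exp (1 + c * L0) * exp (- (a * L))"
    using central_factor_bound[OF m] central_factor_pos[of m] unfolding c_def a_def L0_def
    by (intro mult_right_mono mult_mono) (simp_all add: n_def field_simps)
  also have "\<dots> = exp (a + 1 + c * L0 - a * L)"
    unfolding a_def by (simp add: exp_add exp_diff exp_minus field_simps)
  also have "\<dots> \<le> exp (1 - 3/1000 * L)"
    using growth_pays_factor_2[OF m] unfolding L_def L0_def c_def a_def n_def
    by (simp add: algebra_simps)
  finally show ?thesis unfolding L_def n_def by (simp only: mult.assoc)
qed

lemma phi2_le_twice_first_term: "phi2 n \<le> 2 * B_term n (nat \<lceil>real n / 2\<rceil>)"
proof -
  define lo where "lo = nat \<lceil>real n / 2\<rceil>"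
  have "real n / 2 \<le> real lo" unfolding lo_def using le_of_int_ceiling[of "real n / 2"] by linarith
  then have lo: "n \<le> 2 * lo" "lo \<le> n" unfolding lo_def by linarith+
  have "phi2 n \<le> 2 * B_term n lo - B_term n n"
    unfolding phi2_def lo_def[symmetric] using lo
    by (intro sum_halving_le B_term_halves) simp_all
  then show ?thesis unfolding lo_def using B_term_nonneg[of n n] by linarith
qed

lemma twice_first_term_bound:
  assumes "n \<ge> 9"
  shows "2 * B_term n (nat \<lceil>real n / 2\<rceil>) \<le> exp (1 - 3/1000 * real n * ln (real n))"
proof (cases "even n")
  case True
  then obtain m where n: "n = 2 * m" by blast
  then show ?thesis using first_term_even[of m] assms by simp
next
  case False
  then obtain m where n: "n = 2 * m + 1" using oddE by blast
  have "\<lceil>real n / 2\<rceil> = int m + 1" by (rule ceiling_unique) (simp_all add: n)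
  then show ?thesis using first_term_odd[of m] assms n by (simp add: nat_add_distrib)
qed

theorem proposition4p4:
  fixes n :: nat
  assumes "n \<ge> 9"
  shows "phi2 n \<le> exp (1 - 3 / 1000 * real n * ln (real n))"
proof -
  have "phi2 n \<le> 2 * B_term n (nat \<lceil>real n / 2\<rceil>)" by (rule phi2_le_twice_first_term)
  also have "\<dots> \<le> exp (1 - 3 / 1000 * real n * ln (real n))"
    using assms by (rule twice_first_term_bound)
  finally show ?thesis .
qed

end
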